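(* Let $\kappa,\gamma,\tau,\theta,f,s$ be strictly positive real constants, let $A = 2e^{-\gamma\tau}$, and let $\beta(Q) = f\,\dfrac{\theta^{s}}{\theta^{s}+Q^{s}}$ for $Q \ge 0$. Consider the delay differential equation $$Q'(t) = -\bigl(\kappa+\beta(Q(t))\bigr)Q(t) + A\,\beta(Q(t-\tau))\,Q(t-\tau).$$ If $Q(t)=\varphi(t)$ for $t\in[-\tau,0]$, where $\varphi\in C([-\tau,0],[0,\infty))$ (i.e. $\varphi$ is continuous and non-negative on $[-\tau,0]$), then this equation has a unique solution $Q(t)$ defined for all $t\ge 0$, and there exists some $M<\infty$ such that $Q(t)\in[0,M]$ for all $t\ge 0$.
   Context: This is the Burns–Tannock/Mackey model for the concentration $Q(t)$ of hematopoietic stem cells in the resting phase: $\kappa$ is the differentiation rate, $\gamma$ the apoptosis rate during proliferation, $\tau$ the cell-cycle duration (constant delay), $\beta$ the rate of entry into the cell cycle (a Hill function with maximal rate $f$, half-effect concentration $\theta$ and Hill coefficient $s$), and $A=2e^{-\gamma\tau}$ the amplification factor. A solution with initial history $\varphi$ means a continuous function $Q$ on $[-\tau,\infty)$ equal to $\varphi$ on $[-\tau,0]$ and satisfying the differential equation for $t>0$. *)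

theory Defs
  imports "HOL-Analysis.Analysis"
begin

text \<open>Rate of entry into the cell cycle (Hill function). The paper defines it for
  q \<ge> 0; we use |q| so that it is a total function on the reals, agreeing with
  the paper's beta on [0,\<infinity>).\<close>
definition hill_beta :: "real \<Rightarrow> real \<Rightarrow> real \<Rightarrow> real \<Rightarrow> real" where
  "hill_beta f \<theta> s q = f * (\<theta> powr s / (\<theta> powr s + \<bar>q\<bar> powr s))"

definition amp :: "real \<Rightarrow> real \<Rightarrow> real" where
  "amp \<gamma> \<tau> = 2 * exp (- \<gamma> * \<tau>)"

definition is_solution ::
  "real \<Rightarrow> real \<Rightarrow> real \<Rightarrow> real \<Rightarrow> real \<Rightarrow> real \<Rightarrow> (real \<Rightarrow> real) \<Rightarrow> (real \<Rightarrow> real) \<Rightarrow> bool" where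
  "is_solution \<kappa> \<gamma> \<tau> \<theta> f s \<phi> Q \<longleftrightarrow>
     continuous_on {-\<tau>..} Q \<and>
     (\<forall>t\<in>{-\<tau>..0}. Q t = \<phi> t) \<and>
     (\<forall>t>0. (Q has_real_derivative
          (- (\<kappa> + hill_beta f \<theta> s (Q t)) * Q t
           + amp \<gamma> \<tau> * hill_beta f \<theta> s (Q (t - \<tau>)) * Q (t - \<tau>))) (at t))"

end

theory Submission
  imports Defs "HOL-Real_Asymp.Real_Asymp"
begin

text \<open>
  Both rate terms \<open>(\<kappa> + \<beta>(Q)) Q\<close> and \<open>A \<beta>(Q) Q\<close> are globally Lipschitz, since \<open>\<beta>(q) q\<close> is
  \<open>f \<theta>\<^sup>s q / (\<theta>\<^sup>s + |q|\<^sup>s)\<close>, whose derivative is bounded by \<open>f (1 + s)\<close>. Uniqueness follows by the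
  method of steps: on \<open>[n\<tau>, (n+1)\<tau>]\<close> the delayed terms of two solutions coincide, and a
  Gronwall estimate for the square of their difference forces it to vanish. Existence follows
  from Banach's fixed point theorem for the integral form of the equation, a contraction for an
  exponentially weighted sup norm. Finally, since \<open>\<beta>(q) \<rightarrow> 0\<close>, some \<open>M\<close> above the history
  satisfies \<open>A \<beta>(q) q \<le> \<kappa> M\<close> on \<open>[0, M]\<close>; then on each step the vector field points into
  \<open>[0, M]\<close> wherever the solution lies outside it, so \<open>[0, M]\<close> is invariant.
\<close>

section \<open>The Hill function\<close>

lemma hill_beta_nonneg: "f \<ge> 0 \<Longrightarrow> \<theta> > 0 \<Longrightarrow> 0 \<le> hill_beta f \<theta> s q"
  by (simp add: hill_beta_def add_pos_nonneg)

lemma hill_beta_le: "f \<ge> 0 \<Longrightarrow> \<theta> > 0 \<Longrightarrow> hill_beta f \<theta> s q \<le> f"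
  unfolding hill_beta_def
  by (rule mult_left_le) (simp_all add: add_pos_nonneg)

lemma hill_beta_mult_eq:
  "\<theta> > 0 \<Longrightarrow> hill_beta f \<theta> s q * q = f * \<theta> powr s * (q / (\<theta> powr s + \<bar>q\<bar> powr s))"
  by (simp add: hill_beta_def)

lemma abs_hill_quotient_le: "(c::real) > 0 \<Longrightarrow> \<bar>q / (c + \<bar>q\<bar> powr s)\<bar> \<le> \<bar>q\<bar> / c"
proof -
  assume "c > 0"
  then have "c + \<bar>q\<bar> powr s > 0"
    by (simp add: add_pos_nonneg)
  then have "\<bar>q / (c + \<bar>q\<bar> powr s)\<bar> = \<bar>q\<bar> / (c + \<bar>q\<bar> powr s)"
    by (simp add: abs_div)
  also have "\<dots> \<le> \<bar>q\<bar> / c"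
    by (rule frac_le) (use \<open>c > 0\<close> in auto)
  finally show ?thesis .
qed

lemma hill_quotient_has_real_derivative:
  fixes c s z :: real
  assumes "c > 0" "z > 0"
  shows "((\<lambda>q. q / (c + \<bar>q\<bar> powr s)) has_real_derivative
           (c + (1 - s) * z powr s) / (c + z powr s)\<^sup>2) (at z)"
proof -
  have "c + z powr s > 0"
    using assms by (simp add: add_pos_nonneg)
  then have "((\<lambda>q. q / (c + q powr s)) has_real_derivative
           (1 * (c + z powr s) - z * (s * z powr (s - 1))) / (c + z powr s)\<^sup>2) (at z)"
    using assms by (auto intro!: derivative_eq_intros simp: power2_eq_square)
  moreover have "z * z powr (s - 1) = z powr s"
    using assms by (simp add: powr_diff)
  ultimately have "((\<lambda>q. q / (c + q powr s)) has_real_derivative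
           (c + (1 - s) * z powr s) / (c + z powr s)\<^sup>2) (at z)"
    by (simp add: algebra_simps)
  then show ?thesis
    by (rule has_field_derivative_transform_within_open[where S = "{0<..}"]) (use assms in auto)
qed

lemma hill_quotient_derivative_bound:
  fixes c s p :: real
  assumes "c > 0" "s > 0" "p \<ge> 0"
  shows "\<bar>(c + (1 - s) * p) / (c + p)\<^sup>2\<bar> \<le> (1 + s) / c"
proof -
  have "\<bar>c + (1 - s) * p\<bar> \<le> (1 + s) * (c + p)"
    using assms by (auto simp: abs_if algebra_simps intro: mult_left_mono)
  then have "\<bar>(c + (1 - s) * p) / (c + p)\<^sup>2\<bar> \<le> (1 + s) * (c + p) / (c + p)\<^sup>2"
    using assms by (simp add: abs_div divide_right_mono)
  also have "\<dots> = (1 + s) / (c + p)"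
    using assms by (simp add: power2_eq_square)
  also have "\<dots> \<le> (1 + s) / c"
    using assms by (intro divide_left_mono) auto
  finally show ?thesis .
qed

lemma lipschitz_on_hill_quotient_pos:
  fixes c s :: real
  assumes "c > 0" "s > 0"
  shows "lipschitz_on ((1 + s) / c) {0<..} (\<lambda>q. q / (c + \<bar>q\<bar> powr s))"
proof (rule lipschitz_onI)
  let ?h' = "\<lambda>z. (c + (1 - s) * z powr s) / (c + z powr s)\<^sup>2"
  have "((\<lambda>q. q / (c + \<bar>q\<bar> powr s)) has_real_derivative ?h' z) (at z within {0<..})"
    if "z \<in> {0<..}" for z
    using that by (auto intro: has_field_derivative_at_within[OF hill_quotient_has_real_derivative[OF assms(1)]])
  moreover have "norm (?h' z) \<le> (1 + s) / c" for z
    using hill_quotient_derivative_bound[OF assms, of "z powr s"] by simp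
  moreover fix x y :: real assume "x \<in> {0<..}" "y \<in> {0<..}"
  ultimately have "norm (x / (c + \<bar>x\<bar> powr s) - y / (c + \<bar>y\<bar> powr s)) \<le> (1 + s) / c * norm (x - y)"
    by (rule field_differentiable_bound[OF convex_real_interval(3)])
  then show "dist (x / (c + \<bar>x\<bar> powr s)) (y / (c + \<bar>y\<bar> powr s)) \<le> (1 + s) / c * dist x y"
    by (simp add: dist_norm)
qed (use assms in simp)

lemma lipschitz_on_hill_quotient:
  fixes c s :: real
  assumes "c > 0" "s > 0"
  shows "((1 + s) / c)-lipschitz_on UNIV (\<lambda>q. q / (c + \<bar>q\<bar> powr s))"
proof (rule lipschitz_onI)
  let ?h = "\<lambda>q::real. q / (c + \<bar>q\<bar> powr s)"
  note pos = lipschitz_onD[OF lipschitz_on_hill_quotient_pos[OF assms]]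
  fix x y :: real
  consider "x > 0" "y > 0" | "x < 0" "y < 0" | "x * y \<le> 0"
    by (smt (verit) mult_le_0_iff)
  then show "dist (?h x) (?h y) \<le> (1 + s) / c * dist x y"
  proof cases
    case 1
    then show ?thesis using pos[of x y] by simp
  next
    case 2
    then show ?thesis using pos[of "- x" "- y"] by (simp add: dist_real_def abs_minus_commute)
  next
    case 3
    then have "\<bar>x - y\<bar> = \<bar>x\<bar> + \<bar>y\<bar>"
      by (auto simp: abs_if mult_le_0_iff)
    have "\<bar>?h x - ?h y\<bar> \<le> \<bar>x\<bar> / c + \<bar>y\<bar> / c"
      using abs_hill_quotient_le[OF assms(1), of x s] abs_hill_quotient_le[OF assms(1), of y s]
      by linarith
    also have "\<dots> = 1 / c * \<bar>x - y\<bar>"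
      using \<open>\<bar>x - y\<bar> = \<bar>x\<bar> + \<bar>y\<bar>\<close> by (simp add: add_divide_distrib)
    also have "\<dots> \<le> (1 + s) / c * \<bar>x - y\<bar>"
      using assms by (intro mult_right_mono divide_right_mono) auto
    finally show ?thesis by (simp add: dist_real_def)
  qed
qed (use assms in simp)

lemma lipschitz_on_hill_beta_mult:
  fixes f \<theta> s :: real
  assumes "f \<ge> 0" "\<theta> > 0" "s > 0"
  shows "(f * (1 + s))-lipschitz_on UNIV (\<lambda>q. hill_beta f \<theta> s q * q)"
proof -
  have "(f * \<theta> powr s * ((1 + s) / \<theta> powr s))-lipschitz_on UNIV
          (\<lambda>q. f * \<theta> powr s * (q / (\<theta> powr s + \<bar>q\<bar> powr s)))"
    using assms by (intro lipschitz_on_cmult_real_nonneg lipschitz_on_hill_quotient) auto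
  then show ?thesis
    using assms by (simp add: hill_beta_mult_eq)
qed

section \<open>Delay equations: the method of steps and uniqueness\<close>

definition delay_solution ::
  "real \<Rightarrow> (real \<Rightarrow> real) \<Rightarrow> (real \<Rightarrow> real) \<Rightarrow> (real \<Rightarrow> real) \<Rightarrow> (real \<Rightarrow> real) \<Rightarrow> bool" where
  "delay_solution \<tau> F G \<phi> Q \<longleftrightarrow>
     continuous_on {-\<tau>..} Q \<and> (\<forall>t\<in>{-\<tau>..0}. Q t = \<phi> t) \<and>
     (\<forall>t>0. (Q has_real_derivative - F (Q t) + G (Q (t - \<tau>))) (at t))"

lemma method_of_steps:
  fixes \<tau> t :: real
  assumes "\<tau> > 0" "t \<ge> -\<tau>"
    and history: "\<And>u. u \<in> {-\<tau>..0} \<Longrightarrow> P u"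
    and step: "\<And>a u. a \<ge> 0 \<Longrightarrow> (\<And>v. v \<in> {-\<tau>..a} \<Longrightarrow> P v) \<Longrightarrow> u \<in> {a<..a + \<tau>} \<Longrightarrow> P u"
  shows "P t"
proof -
  have "\<forall>u\<in>{-\<tau>..real n * \<tau>}. P u" for n
  proof (induction n)
    case 0
    then show ?case using history by simp
  next
    case (Suc n)
    have "P u" if "u \<in> {-\<tau>..real (Suc n) * \<tau>}" for u
    proof (cases "u \<le> real n * \<tau>")
      case True
      with Suc.IH that show ?thesis by auto
    next
      case False
      with that show ?thesis
        using step[of "real n * \<tau>" u] Suc.IH \<open>\<tau> > 0\<close> by (auto simp: algebra_simps)
    qed
    then show ?case ..
  qed
  moreover obtain n where "t / \<tau> \<le> real n"
    using real_arch_simple by blast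
  then have "t \<le> real n * \<tau>"
    using \<open>\<tau> > 0\<close> by (simp add: divide_le_eq)
  ultimately show ?thesis
    using \<open>t \<ge> -\<tau>\<close> by auto
qed

lemma nonneg_if_deriv_pos_where_neg:
  fixes g D :: "real \<Rightarrow> real" and a b :: real
  assumes "a \<le> b" "continuous_on {a..b} g" "g a \<ge> 0"
    and deriv: "\<And>x. x \<in> {a<..b} \<Longrightarrow> (g has_real_derivative D x) (at x)"
    and pos: "\<And>x. x \<in> {a<..b} \<Longrightarrow> g x < 0 \<Longrightarrow> D x > 0"
  shows "g b \<ge> 0"
proof (rule ccontr)
  assume "\<not> g b \<ge> 0"
  obtain \<xi> where \<xi>: "\<xi> \<in> {a..b}" and min: "\<And>y. y \<in> {a..b} \<Longrightarrow> g \<xi> \<le> g y"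
    using continuous_attains_inf[OF compact_Icc _ assms(2)] \<open>a \<le> b\<close> by auto
  have "g \<xi> < 0"
    using min[of b] \<open>a \<le> b\<close> \<open>\<not> g b \<ge> 0\<close> by auto
  then have "\<xi> \<in> {a<..b}"
    using \<xi> \<open>g a \<ge> 0\<close> by (cases "\<xi> = a") auto
  then obtain d where "d > 0" and left: "\<And>h. 0 < h \<Longrightarrow> h < d \<Longrightarrow> g (\<xi> - h) < g \<xi>"
    using DERIV_pos_inc_left[OF deriv pos] \<open>g \<xi> < 0\<close> by blast
  define h where "h = min (d / 2) ((\<xi> - a) / 2)"
  have "0 < h" "h < d" "h < \<xi> - a"
    using \<open>d > 0\<close> \<open>\<xi> \<in> {a<..b}\<close> by (auto simp: h_def min_less_iff_disj)
  then have "g (\<xi> - h) < g \<xi>" "\<xi> - h \<in> {a..b}"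
    using left \<open>\<xi> \<in> {a<..b}\<close> by auto
  with min show False by fastforce
qed

lemma eq_0_if_abs_deriv_le:
  fixes d D :: "real \<Rightarrow> real" and a b L :: real
  assumes "a \<le> b" "continuous_on {a..b} d" "d a = 0"
    and deriv: "\<And>x. x \<in> {a<..<b} \<Longrightarrow> (d has_real_derivative D x) (at x)"
    and bound: "\<And>x. x \<in> {a<..<b} \<Longrightarrow> \<bar>D x\<bar> \<le> L * \<bar>d x\<bar>"
  shows "d b = 0"
proof -
  define e where "e x = exp (- 2 * L * x) * (d x)\<^sup>2" for x
  have "e b \<le> e a"
  proof (rule DERIV_nonpos_imp_decreasing_open[OF \<open>a \<le> b\<close>])
    fix x assume "a < x" "x < b"
    then have x: "x \<in> {a<..<b}" by simp
    have "(e has_real_derivative exp (- 2 * L * x) * (2 * (d x * D x - L * (d x)\<^sup>2))) (at x)"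
      unfolding e_def by (auto intro!: derivative_eq_intros deriv[OF x] simp: algebra_simps power2_eq_square)
    moreover have "d x * D x \<le> L * (d x)\<^sup>2"
    proof -
      have "d x * D x \<le> \<bar>d x\<bar> * \<bar>D x\<bar>" by (simp add: abs_mult[symmetric])
      also have "\<dots> \<le> \<bar>d x\<bar> * (L * \<bar>d x\<bar>)" by (intro mult_left_mono bound[OF x]) simp
      also have "\<dots> = L * \<bar>d x\<bar>\<^sup>2" by (simp add: power2_eq_square)
      finally show ?thesis by simp
    qed
    ultimately show "\<exists>y. (e has_real_derivative y) (at x) \<and> y \<le> 0"
      by (intro exI[of _ "exp (- 2 * L * x) * (2 * (d x * D x - L * (d x)\<^sup>2))"])
        (auto simp: mult_nonneg_nonpos)
  next
    show "continuous_on {a..b} e"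
      unfolding e_def using assms(2) by (intro continuous_intros)
  qed
  then have "exp (- 2 * L * b) * (d b)\<^sup>2 \<le> 0"
    using \<open>d a = 0\<close> by (simp add: e_def)
  then have "(d b)\<^sup>2 \<le> 0"
    by (simp add: mult_le_0_iff)
  then show ?thesis by simp
qed

lemma delay_solution_unique:
  fixes F G \<phi> Q1 Q2 :: "real \<Rightarrow> real" and \<tau> L t :: real
  assumes "\<tau> > 0" "L-lipschitz_on UNIV F"
    and Q1: "delay_solution \<tau> F G \<phi> Q1" and Q2: "delay_solution \<tau> F G \<phi> Q2"
    and "t \<ge> -\<tau>"
  shows "Q1 t = Q2 t"
  using \<open>\<tau> > 0\<close> \<open>t \<ge> -\<tau>\<close>
proof (rule method_of_steps)
  show "Q1 u = Q2 u" if "u \<in> {-\<tau>..0}" for u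
    using Q1 Q2 that by (simp add: delay_solution_def)
next
  fix a u assume "a \<ge> 0" and agree: "\<And>v. v \<in> {-\<tau>..a} \<Longrightarrow> Q1 v = Q2 v" and u: "u \<in> {a<..a + \<tau>}"
  have sub: "{a..u} \<subseteq> {-\<tau>..}"
    using \<open>a \<ge> 0\<close> \<open>\<tau> > 0\<close> by auto
  have "Q1 u - Q2 u = 0"
  proof (rule eq_0_if_abs_deriv_le[where d = "\<lambda>x. Q1 x - Q2 x" and a = a and b = u and L = L])
    show "a \<le> u" "Q1 a - Q2 a = 0"
      using u \<open>a \<ge> 0\<close> \<open>\<tau> > 0\<close> agree[of a] by auto
    show "continuous_on {a..u} (\<lambda>x. Q1 x - Q2 x)"
      using Q1 Q2 by (intro continuous_intros continuous_on_subset[OF _ sub]) (auto simp: delay_solution_def)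
  next
    fix x assume x: "x \<in> {a<..<u}"
    then have "x > 0" "Q1 (x - \<tau>) = Q2 (x - \<tau>)"
      using \<open>a \<ge> 0\<close> u by (auto intro!: agree)
    then show "((\<lambda>x. Q1 x - Q2 x) has_real_derivative - (F (Q1 x) - F (Q2 x))) (at x)"
      using Q1 Q2 unfolding delay_solution_def
      by (auto intro!: derivative_eq_intros simp: algebra_simps)
    show "\<bar>- (F (Q1 x) - F (Q2 x))\<bar> \<le> L * \<bar>Q1 x - Q2 x\<bar>"
      using lipschitz_onD[OF assms(2), of "Q1 x" "Q2 x"] by (simp add: dist_real_def abs_minus_commute)
  qed
  then show "Q1 u = Q2 u" by simp
qed

section \<open>Existence by a weighted contraction argument\<close>

lemma integral_exp_scaled:
  fixes a T :: real
  assumes "a > 0" "T \<ge> 0"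
  shows "integral {0..T} (\<lambda>u. exp (a * u)) = (exp (a * T) - 1) / a"
proof -
  have "((\<lambda>u. exp (a * u)) has_integral (exp (a * T) / a - exp (a * 0) / a)) {0..T}"
  proof (rule fundamental_theorem_of_calculus)
    fix x assume "x \<in> {0..T}"
    have "((\<lambda>u. exp (a * u) / a) has_real_derivative exp (a * x)) (at x)"
      using assms by (auto intro!: derivative_eq_intros)
    then show "((\<lambda>u. exp (a * u) / a) has_vector_derivative exp (a * x)) (at x within {0..T})"
      by (simp add: has_real_derivative_iff_has_vector_derivative has_vector_derivative_at_within)
  qed (use assms in simp)
  then show ?thesis
    by (simp add: integral_unique diff_divide_distrib)
qed

lemma continuous_on_integral_from_0:
  fixes g :: "real \<Rightarrow> real"
  assumes "continuous_on UNIV g"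
  shows "continuous_on UNIV (\<lambda>t. integral {0..max t 0} g)"
proof -
  have "isCont (\<lambda>t. integral {0..max t 0} g) x" for x
  proof -
    define b where "b = \<bar>x\<bar> + 1"
    have "continuous_on {0..b} (\<lambda>y. integral {0..y} g)"
      by (intro indefinite_integral_continuous_1 integrable_continuous_real
          continuous_on_subset[OF assms]) simp
    moreover have "continuous_on {-b..b} (\<lambda>t. max t 0 :: real)"
      by (intro continuous_intros)
    moreover have "(\<lambda>t. max t 0) ` {-b..b} \<subseteq> {0..b}"
      by (auto simp: b_def)
    ultimately have "continuous_on {-b..b} (\<lambda>t. integral {0..max t 0} g)"
      using continuous_on_compose2 by blast
    moreover have "x \<in> interior {-b..b}"
      by (auto simp: b_def abs_if)
    ultimately show ?thesis
      using continuous_on_interior by blast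
  qed
  then show ?thesis
    by (simp add: continuous_on_eq_continuous_at)
qed

lemma continuous_on_delay_rhs:
  fixes F G Q :: "real \<Rightarrow> real" and \<tau> :: real
  assumes "continuous_on UNIV F" "continuous_on UNIV G" "continuous_on UNIV Q"
  shows "continuous_on UNIV (\<lambda>u. - F (Q u) + G (Q (u - \<tau>)))"
proof -
  have "continuous_on UNIV (\<lambda>u. u - \<tau>)"
    by (intro continuous_intros)
  then have "continuous_on UNIV (\<lambda>u. Q (u - \<tau>))"
    by (rule continuous_on_compose2[OF assms(3)]) simp
  then have "continuous_on UNIV (\<lambda>u. G (Q (u - \<tau>)))"
    by (rule continuous_on_compose2[OF assms(2)]) simp
  moreover have "continuous_on UNIV (\<lambda>u. F (Q u))"
    by (rule continuous_on_compose2[OF assms(1,3)]) simp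
  ultimately show ?thesis
    by (intro continuous_on_add continuous_on_minus)
qed

text \<open>The history is frozen outside \<open>[-\<tau>, 0]\<close>, so that the operator acts on continuous
  functions on the whole real line.\<close>
definition delay_picard ::
  "real \<Rightarrow> (real \<Rightarrow> real) \<Rightarrow> (real \<Rightarrow> real) \<Rightarrow> (real \<Rightarrow> real) \<Rightarrow> (real \<Rightarrow> real) \<Rightarrow> real \<Rightarrow> real" where
  "delay_picard \<tau> F G \<phi> Q t =
     \<phi> (max (-\<tau>) (min t 0)) + integral {0..max t 0} (\<lambda>u. - F (Q u) + G (Q (u - \<tau>)))"

lemma continuous_on_delay_picard:
  fixes F G \<phi> Q :: "real \<Rightarrow> real" and \<tau> :: real
  assumes "\<tau> \<ge> 0" "continuous_on {-\<tau>..0} \<phi>"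
    and "continuous_on UNIV F" "continuous_on UNIV G" "continuous_on UNIV Q"
  shows "continuous_on UNIV (delay_picard \<tau> F G \<phi> Q)"
proof -
  have "continuous_on UNIV (\<lambda>t. max (-\<tau>) (min t 0))"
    by (intro continuous_intros)
  then have "continuous_on UNIV (\<lambda>t. \<phi> (max (-\<tau>) (min t 0)))"
    by (rule continuous_on_compose2[OF assms(2)]) (use assms(1) in auto)
  then show ?thesis
    unfolding delay_picard_def
    by (intro continuous_on_add continuous_on_integral_from_0 continuous_on_delay_rhs assms(3-5))
qed

lemma delay_solution_if_fixed_point:
  fixes F G \<phi> Q :: "real \<Rightarrow> real" and \<tau> :: real
  assumes "\<tau> \<ge> 0" "continuous_on UNIV F" "continuous_on UNIV G" "continuous_on UNIV Q"
    and fixed: "\<And>t. Q t = delay_picard \<tau> F G \<phi> Q t"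
  shows "delay_solution \<tau> F G \<phi> Q"
  unfolding delay_solution_def
proof (intro conjI allI impI ballI)
  show "continuous_on {-\<tau>..} Q"
    using assms(4) by (rule continuous_on_subset) simp
  show "Q t = \<phi> t" if "t \<in> {-\<tau>..0}" for t
    using that by (subst fixed) (simp add: delay_picard_def)
  fix t :: real assume "t > 0"
  let ?g = "\<lambda>u. - F (Q u) + G (Q (u - \<tau>))"
  have "continuous_on {0..t + 1} ?g"
    using continuous_on_delay_rhs[OF assms(2-4)] by (rule continuous_on_subset) simp
  then have "((\<lambda>x. integral {0..x} ?g) has_real_derivative ?g t) (at t within {0..t + 1})"
    using \<open>t > 0\<close> by (intro integral_has_real_derivative) auto
  then have "((\<lambda>x. \<phi> 0 + integral {0..x} ?g) has_real_derivative ?g t) (at t)"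
    using at_within_Icc_at[of 0 t "t + 1"] \<open>t > 0\<close> by (auto intro!: derivative_eq_intros)
  then show "(Q has_real_derivative ?g t) (at t)"
  proof (rule has_field_derivative_transform_within_open[where S = "{0<..}"])
    show "\<phi> 0 + integral {0..x} ?g = Q x" if "x \<in> {0<..}" for x
      using that assms(1) by (subst fixed) (simp add: delay_picard_def)
  qed (use \<open>t > 0\<close> in auto)
qed

lemma delay_picard_weighted_dist:
  fixes F G \<phi> Q1 Q2 :: "real \<Rightarrow> real" and \<tau> L D t :: real
  assumes "L > 0" "\<tau> \<ge> 0"
    and lipF: "L-lipschitz_on UNIV F" and lipG: "L-lipschitz_on UNIV G"
    and "continuous_on UNIV Q1" "continuous_on UNIV Q2"
    and dist: "\<And>u. \<bar>Q1 u - Q2 u\<bar> \<le> exp (4 * L * max u 0) * D"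
  shows "\<bar>delay_picard \<tau> F G \<phi> Q1 t - delay_picard \<tau> F G \<phi> Q2 t\<bar> \<le> exp (4 * L * max t 0) * D / 2"
proof -
  let ?T = "max t 0"
  let ?g = "\<lambda>Q u. - F (Q u) + G (Q (u - \<tau>))"
  have "D \<ge> 0"
    using dist[of 0] abs_ge_zero[of "Q1 0 - Q2 0"] by simp
  have int: "?g Q integrable_on {0..?T}" if "continuous_on UNIV Q" for Q
    using continuous_on_delay_rhs[OF lipschitz_on_continuous_on[OF lipF]
        lipschitz_on_continuous_on[OF lipG] that]
    by (intro integrable_continuous_real) (auto intro: continuous_on_subset)
  have pointwise: "norm (?g Q1 u - ?g Q2 u) \<le> 2 * L * D * exp (4 * L * u)" if "u \<in> {0..?T}" for u
  proof -
    have "exp (4 * L * max (u - \<tau>) 0) \<le> exp (4 * L * u)"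
      using that \<open>L > 0\<close> \<open>\<tau> \<ge> 0\<close> by simp
    then have delayed: "\<bar>Q1 (u - \<tau>) - Q2 (u - \<tau>)\<bar> \<le> exp (4 * L * u) * D"
      using dist[of "u - \<tau>"] \<open>D \<ge> 0\<close> by (meson mult_right_mono order_trans)
    have "\<bar>?g Q1 u - ?g Q2 u\<bar> \<le> \<bar>F (Q1 u) - F (Q2 u)\<bar> + \<bar>G (Q1 (u - \<tau>)) - G (Q2 (u - \<tau>))\<bar>"
      by linarith
    also have "\<dots> \<le> L * \<bar>Q1 u - Q2 u\<bar> + L * \<bar>Q1 (u - \<tau>) - Q2 (u - \<tau>)\<bar>"
      using lipschitz_onD[OF lipF] lipschitz_onD[OF lipG] by (intro add_mono) (auto simp: dist_real_def)
    also have "\<dots> \<le> L * (exp (4 * L * u) * D) + L * (exp (4 * L * u) * D)"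
      using dist[of u] delayed that \<open>L > 0\<close> by (intro add_mono mult_left_mono) auto
    finally show ?thesis by (simp add: algebra_simps)
  qed
  have "\<bar>delay_picard \<tau> F G \<phi> Q1 t - delay_picard \<tau> F G \<phi> Q2 t\<bar>
      = norm (integral {0..?T} (\<lambda>u. ?g Q1 u - ?g Q2 u))"
    using integral_diff[OF int int] assms(5,6) by (simp add: delay_picard_def)
  also have "\<dots> \<le> integral {0..?T} (\<lambda>u. 2 * L * D * exp (4 * L * u))"
    using pointwise
    by (intro integral_norm_bound_integral integrable_diff int assms(5,6)
        integrable_continuous_real continuous_on_mult continuous_on_const continuous_on_exp continuous_on_id)
  also have "\<dots> = 2 * L * D * ((exp (4 * L * ?T) - 1) / (4 * L))"
    using integral_exp_scaled[of "4 * L" ?T] \<open>L > 0\<close> by simp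
  also have "\<dots> \<le> exp (4 * L * ?T) * D / 2"
    using \<open>L > 0\<close> \<open>D \<ge> 0\<close> by (simp add: field_simps)
  finally show ?thesis .
qed

lemma delay_picard_weighted_bound:
  fixes F G \<phi> Q :: "real \<Rightarrow> real" and \<tau> L B D t :: real
  assumes "L > 0" "\<tau> \<ge> 0"
    and lipF: "L-lipschitz_on UNIV F" and lipG: "L-lipschitz_on UNIV G" and "F 0 = 0" "G 0 = 0"
    and history: "\<And>u. u \<in> {-\<tau>..0} \<Longrightarrow> \<bar>\<phi> u\<bar> \<le> B"
    and "continuous_on UNIV Q" "\<And>u. \<bar>Q u\<bar> \<le> exp (4 * L * max u 0) * D"
  shows "\<bar>delay_picard \<tau> F G \<phi> Q t\<bar> \<le> exp (4 * L * max t 0) * (B + D / 2)"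
proof -
  let ?c = "max (-\<tau>) (min t 0)" and ?w = "exp (4 * L * max t 0)"
  have "\<bar>Q u - 0\<bar> \<le> exp (4 * L * max u 0) * D" for u
    using assms(9) by simp
  from delay_picard_weighted_dist[OF assms(1-4,8) continuous_on_const this]
  have "\<bar>delay_picard \<tau> F G \<phi> Q t - \<phi> ?c\<bar> \<le> ?w * D / 2"
    using assms(5,6) by (simp add: delay_picard_def)
  moreover have "\<bar>\<phi> ?c\<bar> \<le> ?w * B"
  proof -
    have "\<bar>\<phi> ?c\<bar> \<le> B" and "0 \<le> B" and "1 \<le> ?w"
      using history[of ?c] history[of 0] \<open>\<tau> \<ge> 0\<close> \<open>L > 0\<close> by auto
    moreover have "B \<le> ?w * B"
      using \<open>0 \<le> B\<close> \<open>1 \<le> ?w\<close> by (simp add: mult_le_cancel_right1)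
    ultimately show ?thesis
      by linarith
  qed
  ultimately have "\<bar>delay_picard \<tau> F G \<phi> Q t\<bar> \<le> ?w * B + ?w * D / 2"
    using abs_triangle_ineq2[of "delay_picard \<tau> F G \<phi> Q t" "\<phi> ?c"] by linarith
  then show ?thesis
    by (simp add: distrib_left)
qed

lemma delay_picard_has_fixed_point:
  fixes F G \<phi> :: "real \<Rightarrow> real" and \<tau> L :: real
  assumes "L > 0" "\<tau> \<ge> 0"
    and lipF: "L-lipschitz_on UNIV F" and lipG: "L-lipschitz_on UNIV G"
    and "F 0 = 0" "G 0 = 0" and cphi: "continuous_on {-\<tau>..0} \<phi>"
  obtains Q where "continuous_on UNIV Q" "\<And>t. Q t = delay_picard \<tau> F G \<phi> Q t"
proof -
  text \<open>With Bielecki's weight \<open>w\<close>, the Picard operator becomes a contraction on the bounded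
    continuous functions \<open>u\<close> standing for \<open>Q = w u\<close>.\<close>
  define w where "w t = exp (4 * L * max t 0)" for t
  define Q where "Q u s = w s * apply_bcontfun u s" for u s
  define P where "P u t = delay_picard \<tau> F G \<phi> (Q u) t / w t" for u t
  have w: "w t > 0" "w t \<noteq> 0" for t
    by (simp_all add: w_def)
  have "continuous_on UNIV w"
    unfolding w_def by (intro continuous_intros)
  have cQ: "continuous_on UNIV (Q u)" for u
    unfolding Q_def w_def by (intro continuous_intros) auto
  have Q_dist: "\<bar>Q u s - Q v s\<bar> \<le> exp (4 * L * max s 0) * dist u v" for u v s
    using dist_bounded[of u s v] w(1)[of s]
    by (simp add: Q_def w_def dist_real_def abs_mult right_diff_distrib[symmetric])
  obtain B where "\<forall>x\<in>\<phi> ` {-\<tau>..0}. norm x \<le> B"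
    using compact_imp_bounded[OF compact_continuous_image[OF cphi compact_Icc]]
    by (auto simp: bounded_iff)
  then have B: "\<And>t. t \<in> {-\<tau>..0} \<Longrightarrow> \<bar>\<phi> t\<bar> \<le> B"
    by auto
  have "P u \<in> bcontfun" for u
  proof (rule bcontfun_normI)
    show "continuous_on UNIV (P u)"
      unfolding P_def
      by (intro continuous_on_divide continuous_on_delay_picard cQ cphi assms(2) ballI w(2)
          lipschitz_on_continuous_on[OF lipF] lipschitz_on_continuous_on[OF lipG]
          \<open>continuous_on UNIV w\<close>)
    have "\<bar>Q u s\<bar> \<le> exp (4 * L * max s 0) * dist u 0" for s
      using Q_dist[where u = u and v = 0 and s = s] by (simp add: Q_def)
    from delay_picard_weighted_bound[OF assms(1-6) B cQ this]
    show "norm (P u t) \<le> B + dist u 0 / 2" for t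
      using w[of t] by (simp add: P_def w_def abs_div pos_divide_le_eq mult.commute)
  qed
  then have apply_P: "apply_bcontfun (Bcontfun (P u)) = P u" for u
    by (rule Bcontfun_inverse)
  have "dist (Bcontfun (P u)) (Bcontfun (P v)) \<le> 1 / 2 * dist u v" for u v
  proof (rule dist_bound)
    from delay_picard_weighted_dist[OF assms(1-4) cQ cQ Q_dist[where u = u and v = v]]
    show "dist (Bcontfun (P u) t) (Bcontfun (P v) t) \<le> 1 / 2 * dist u v" for t
      using w[of t] by (simp add: apply_P P_def w_def dist_real_def abs_div
          diff_divide_distrib[symmetric] pos_divide_le_eq mult.commute)
  qed
  then obtain u where fixed: "Bcontfun (P u) = u"
    using banach_fix_type[of "1 / 2" "\<lambda>u. Bcontfun (P u)"] by auto
  have "Q u t = delay_picard \<tau> F G \<phi> (Q u) t" for t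
    using apply_P[of u] w[of t] by (simp add: fixed P_def Q_def fun_eq_iff)
  with cQ show ?thesis by (rule that)
qed

lemma delay_solution_exists:
  fixes F G \<phi> :: "real \<Rightarrow> real" and \<tau> LF LG :: real
  assumes "\<tau> \<ge> 0" "LF-lipschitz_on UNIV F" "LG-lipschitz_on UNIV G" "F 0 = 0" "G 0 = 0"
    and "continuous_on {-\<tau>..0} \<phi>"
  obtains Q where "delay_solution \<tau> F G \<phi> Q"
proof -
  define L where "L = LF + LG + 1"
  have "L > 0" "L-lipschitz_on UNIV F" "L-lipschitz_on UNIV G"
    using lipschitz_on_nonneg[OF assms(2)] lipschitz_on_nonneg[OF assms(3)]
    by (auto simp: L_def intro: lipschitz_on_le[OF assms(2)] lipschitz_on_le[OF assms(3)])
  then obtain Q where "continuous_on UNIV Q" "\<And>t. Q t = delay_picard \<tau> F G \<phi> Q t"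
    using delay_picard_has_fixed_point assms(1,4-6) by metis
  then show ?thesis
    using delay_solution_if_fixed_point[OF assms(1) lipschitz_on_continuous_on lipschitz_on_continuous_on]
      \<open>L-lipschitz_on UNIV F\<close> \<open>L-lipschitz_on UNIV G\<close> that by blast
qed

section \<open>The stem cell model\<close>

lemma is_solution_iff_delay_solution:
  "is_solution \<kappa> \<gamma> \<tau> \<theta> f s \<phi> Q \<longleftrightarrow>
     delay_solution \<tau> (\<lambda>q. (\<kappa> + hill_beta f \<theta> s q) * q) (\<lambda>q. amp \<gamma> \<tau> * hill_beta f \<theta> s q * q) \<phi> Q"
  unfolding is_solution_def delay_solution_def mult_minus_left ..

lemma lipschitz_on_loss_rate:
  fixes \<kappa> f \<theta> s :: real
  assumes "\<kappa> \<ge> 0" "f \<ge> 0" "\<theta> > 0" "s > 0"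
  shows "(\<kappa> + f * (1 + s))-lipschitz_on UNIV (\<lambda>q. (\<kappa> + hill_beta f \<theta> s q) * q)"
proof -
  have "(\<kappa> * 1 + f * (1 + s))-lipschitz_on UNIV (\<lambda>q. \<kappa> * q + hill_beta f \<theta> s q * q)"
    using assms by (intro lipschitz_on_add lipschitz_on_cmult_real_nonneg lipschitz_on_id lipschitz_on_hill_beta_mult)
  then show ?thesis
    by (simp add: distrib_right)
qed

lemma lipschitz_on_reentry_rate:
  fixes a f \<theta> s :: real
  assumes "a \<ge> 0" "f \<ge> 0" "\<theta> > 0" "s > 0"
  shows "(a * (f * (1 + s)))-lipschitz_on UNIV (\<lambda>q. a * hill_beta f \<theta> s q * q)"
  using lipschitz_on_cmult_real_nonneg[OF lipschitz_on_hill_beta_mult[OF assms(2-4)] assms(1)]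
  by (simp add: mult.assoc)

lemma hill_beta_tendsto_0:
  fixes f \<theta> s :: real
  assumes "\<theta> > 0" "s > 0"
  shows "(hill_beta f \<theta> s \<longlongrightarrow> 0) at_top"
proof -
  have "((\<lambda>q::real. \<theta> powr s / (\<theta> powr s + \<bar>q\<bar> powr s)) \<longlongrightarrow> 0) at_top"
    using assms by real_asymp
  then show ?thesis
    unfolding hill_beta_def using tendsto_mult_right_zero by blast
qed

lemma reentry_le_linear_bound:
  fixes \<kappa> a f \<theta> s :: real
  assumes "\<kappa> > 0" "a \<ge> 0" "f \<ge> 0" "\<theta> > 0" "s > 0"
  obtains M0 where "\<And>M q. M \<ge> M0 \<Longrightarrow> q \<in> {0..M} \<Longrightarrow> a * hill_beta f \<theta> s q * q \<le> \<kappa> * M"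
proof -
  have "((\<lambda>q. a * hill_beta f \<theta> s q) \<longlongrightarrow> a * 0) at_top"
    by (intro tendsto_mult tendsto_const hill_beta_tendsto_0 assms(4,5))
  then have "\<forall>\<^sub>F q in at_top. a * hill_beta f \<theta> s q < \<kappa> / 2"
    using assms(1) by (intro order_tendstoD(2)) auto
  then obtain R where R: "\<And>q. q \<ge> R \<Longrightarrow> a * hill_beta f \<theta> s q \<le> \<kappa> / 2"
    unfolding eventually_at_top_linorder by (meson less_imp_le)
  have "a * hill_beta f \<theta> s q * q \<le> \<kappa> * M"
    if "M \<ge> a * f * max R 0 / \<kappa>" "q \<in> {0..M}" for M q
  proof (cases "q \<ge> R")
    case True
    then have "a * hill_beta f \<theta> s q * q \<le> \<kappa> / 2 * q"
      using R[of q] that(2) by (intro mult_right_mono) auto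
    also have "\<dots> \<le> \<kappa> * M"
      using that(2) assms(1) by auto
    finally show ?thesis .
  next
    case False
    then have "a * hill_beta f \<theta> s q * q \<le> a * f * max R 0"
      using that(2) assms hill_beta_nonneg[of f \<theta> s q] hill_beta_le[of f \<theta> s q]
      by (intro mult_mono mult_left_mono) auto
    also have "\<dots> \<le> \<kappa> * M"
      using that(1) assms(1) by (simp add: pos_divide_le_eq mult.commute)
    finally show ?thesis .
  qed
  then show ?thesis by (rule that)
qed

lemma model_rate_pos_below_0:
  fixes \<kappa> \<gamma> \<tau> \<theta> f s q p :: real
  assumes "\<kappa> > 0" "\<theta> > 0" "f \<ge> 0" "q < 0" "p \<ge> 0"
  shows "0 < - (\<kappa> + hill_beta f \<theta> s q) * q + amp \<gamma> \<tau> * hill_beta f \<theta> s p * p"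
proof -
  have "0 < \<kappa> + hill_beta f \<theta> s q"
    using assms(1) hill_beta_nonneg[OF assms(3,2)] by (rule add_pos_nonneg)
  then have "0 < - (\<kappa> + hill_beta f \<theta> s q) * q"
    using \<open>q < 0\<close> by (intro mult_neg_neg) auto
  moreover have "0 \<le> amp \<gamma> \<tau> * hill_beta f \<theta> s p * p"
    using \<open>p \<ge> 0\<close> hill_beta_nonneg[OF assms(3,2)] by (simp add: amp_def)
  ultimately show ?thesis by linarith
qed

lemma model_rate_neg_above:
  fixes \<kappa> \<gamma> \<tau> \<theta> f s q p M :: real
  assumes "\<kappa> > 0" "\<theta> > 0" "f \<ge> 0" "0 \<le> M" "M < q"
    and "amp \<gamma> \<tau> * hill_beta f \<theta> s p * p \<le> \<kappa> * M"
  shows "- (\<kappa> + hill_beta f \<theta> s q) * q + amp \<gamma> \<tau> * hill_beta f \<theta> s p * p < 0"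
proof -
  have "\<kappa> * M < \<kappa> * q"
    using assms(1,5) by simp
  also have "\<dots> \<le> (\<kappa> + hill_beta f \<theta> s q) * q"
    using assms(4,5) hill_beta_nonneg[OF assms(3,2)] by (intro mult_right_mono) auto
  finally show ?thesis
    using assms(6) by (simp only: mult_minus_left)
qed

lemma is_solution_in_bounds:
  fixes \<kappa> \<gamma> \<tau> \<theta> f s M t :: real and \<phi> Q :: "real \<Rightarrow> real"
  assumes "\<kappa> > 0" "\<tau> > 0" "\<theta> > 0" "f \<ge> 0"
    and sol: "is_solution \<kappa> \<gamma> \<tau> \<theta> f s \<phi> Q"
    and history: "\<And>u. u \<in> {-\<tau>..0} \<Longrightarrow> 0 \<le> \<phi> u \<and> \<phi> u \<le> M"
    and reentry: "\<And>q. q \<in> {0..M} \<Longrightarrow> amp \<gamma> \<tau> * hill_beta f \<theta> s q * q \<le> \<kappa> * M"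
    and "t \<ge> -\<tau>"
  shows "0 \<le> Q t \<and> Q t \<le> M"
  using \<open>\<tau> > 0\<close> \<open>t \<ge> -\<tau>\<close>
proof (rule method_of_steps)
  let ?D = "\<lambda>x. - (\<kappa> + hill_beta f \<theta> s (Q x)) * Q x
    + amp \<gamma> \<tau> * hill_beta f \<theta> s (Q (x - \<tau>)) * Q (x - \<tau>)"
  show "0 \<le> Q u \<and> Q u \<le> M" if "u \<in> {-\<tau>..0}" for u
    using sol history[OF that] that by (simp add: is_solution_def)
  fix a u assume "a \<ge> 0" and IH: "\<And>v. v \<in> {-\<tau>..a} \<Longrightarrow> 0 \<le> Q v \<and> Q v \<le> M"
    and u: "u \<in> {a<..a + \<tau>}"
  have "a \<le> u" "0 \<le> Q a" "Q a \<le> M"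
    using u IH[of a] \<open>a \<ge> 0\<close> \<open>\<tau> > 0\<close> by auto
  have cont: "continuous_on {a..u} Q"
    using sol \<open>a \<ge> 0\<close> \<open>\<tau> > 0\<close> by (auto simp: is_solution_def intro: continuous_on_subset)
  have deriv: "(Q has_real_derivative ?D x) (at x)" if "x \<in> {a<..u}" for x
    using sol that \<open>a \<ge> 0\<close> by (simp add: is_solution_def)
  have delayed: "0 \<le> Q (x - \<tau>)" "Q (x - \<tau>) \<le> M" if "x \<in> {a<..u}" for x
    using IH[of "x - \<tau>"] that u \<open>a \<ge> 0\<close> by auto
  have "0 \<le> Q u"
    using \<open>a \<le> u\<close> cont \<open>0 \<le> Q a\<close> deriv
  proof (rule nonneg_if_deriv_pos_where_neg)
    show "?D x > 0" if "x \<in> {a<..u}" "Q x < 0" for x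
      using assms(1,3,4) that(2) delayed(1)[OF that(1)] by (rule model_rate_pos_below_0)
  qed
  moreover have "0 \<le> M - Q u"
    using \<open>a \<le> u\<close>
  proof (rule nonneg_if_deriv_pos_where_neg[where D = "\<lambda>x. - ?D x"])
    show "continuous_on {a..u} (\<lambda>x. M - Q x)"
      using cont by (intro continuous_intros)
    show "((\<lambda>x. M - Q x) has_real_derivative - ?D x) (at x)" if "x \<in> {a<..u}" for x
      using deriv[OF that] by (auto intro!: derivative_eq_intros)
    show "- ?D x > 0" if "x \<in> {a<..u}" "M - Q x < 0" for x
    proof -
      have "?D x < 0"
        using \<open>0 \<le> Q a\<close> \<open>Q a \<le> M\<close> that(2) delayed[OF that(1)]
        by (intro model_rate_neg_above[OF assms(1,3,4)]) (auto intro: reentry)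
      then show ?thesis by simp
    qed
  qed (use \<open>Q a \<le> M\<close> in simp)
  ultimately show "0 \<le> Q u \<and> Q u \<le> M" by simp
qed

lemma is_solution_exists:
  fixes \<kappa> \<gamma> \<tau> \<theta> f s :: real and \<phi> :: "real \<Rightarrow> real"
  assumes "\<kappa> \<ge> 0" "\<tau> \<ge> 0" "\<theta> > 0" "f \<ge> 0" "s > 0" "continuous_on {-\<tau>..0} \<phi>"
  obtains Q where "is_solution \<kappa> \<gamma> \<tau> \<theta> f s \<phi> Q"
proof -
  have "amp \<gamma> \<tau> \<ge> 0"
    by (simp add: amp_def)
  obtain Q where "delay_solution \<tau> (\<lambda>q. (\<kappa> + hill_beta f \<theta> s q) * q)
      (\<lambda>q. amp \<gamma> \<tau> * hill_beta f \<theta> s q * q) \<phi> Q"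
    by (rule delay_solution_exists[OF assms(2) lipschitz_on_loss_rate[OF assms(1,4,3,5)]
        lipschitz_on_reentry_rate[OF \<open>amp \<gamma> \<tau> \<ge> 0\<close> assms(4,3,5)] mult_zero_right mult_zero_right assms(6)])
  then show ?thesis
    by (intro that) (simp add: is_solution_iff_delay_solution)
qed

lemma is_solution_unique:
  fixes \<kappa> \<gamma> \<tau> \<theta> f s t :: real and \<phi> Q1 Q2 :: "real \<Rightarrow> real"
  assumes "\<kappa> \<ge> 0" "\<tau> > 0" "\<theta> > 0" "f \<ge> 0" "s > 0"
    and "is_solution \<kappa> \<gamma> \<tau> \<theta> f s \<phi> Q1" "is_solution \<kappa> \<gamma> \<tau> \<theta> f s \<phi> Q2" "t \<ge> -\<tau>"
  shows "Q1 t = Q2 t"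
  using delay_solution_unique[OF assms(2) lipschitz_on_loss_rate[OF assms(1,4,3,5)]] assms(6-8)
  by (simp add: is_solution_iff_delay_solution)

lemma is_solution_bounded:
  fixes \<kappa> \<gamma> \<tau> \<theta> f s :: real and \<phi> Q :: "real \<Rightarrow> real"
  assumes "\<kappa> > 0" "\<tau> > 0" "\<theta> > 0" "f \<ge> 0" "s > 0"
    and "continuous_on {-\<tau>..0} \<phi>" "\<And>t. t \<in> {-\<tau>..0} \<Longrightarrow> \<phi> t \<ge> 0"
    and sol: "is_solution \<kappa> \<gamma> \<tau> \<theta> f s \<phi> Q"
  obtains M where "\<And>t. t \<ge> -\<tau> \<Longrightarrow> 0 \<le> Q t \<and> Q t \<le> M"
proof -
  have "amp \<gamma> \<tau> \<ge> 0"
    by (simp add: amp_def)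
  then obtain M0 where M0: "\<And>M q. M \<ge> M0 \<Longrightarrow> q \<in> {0..M} \<Longrightarrow> amp \<gamma> \<tau> * hill_beta f \<theta> s q * q \<le> \<kappa> * M"
    using reentry_le_linear_bound[OF assms(1) _ assms(4,3,5)] by blast
  obtain \<xi> where \<xi>: "\<forall>t\<in>{-\<tau>..0}. \<phi> t \<le> \<phi> \<xi>"
    using continuous_attains_sup[OF compact_Icc _ assms(6)] assms(2) by auto
  define M where "M = max M0 (\<phi> \<xi>)"
  have "0 \<le> Q t \<and> Q t \<le> M" if "t \<ge> -\<tau>" for t
  proof (rule is_solution_in_bounds[OF assms(1-4) sol _ _ that])
    show "0 \<le> \<phi> u \<and> \<phi> u \<le> M" if "u \<in> {-\<tau>..0}" for u
      using assms(7) \<xi> that by (auto simp: M_def intro: le_max_iff_disj[THEN iffD2])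
    show "amp \<gamma> \<tau> * hill_beta f \<theta> s q * q \<le> \<kappa> * M" if "q \<in> {0..M}" for q
      using M0[OF _ that] by (simp add: M_def)
  qed
  then show ?thesis by (rule that)
qed

theorem theorem1:
  fixes \<kappa> \<gamma> \<tau> \<theta> f s :: real and \<phi> :: "real \<Rightarrow> real"
  assumes "\<kappa> > 0" "\<gamma> > 0" "\<tau> > 0" "\<theta> > 0" "f > 0" "s > 0"
    and "continuous_on {-\<tau>..0} \<phi>"
    and "\<forall>t\<in>{-\<tau>..0}. \<phi> t \<ge> 0"
  shows "(\<exists>Q. is_solution \<kappa> \<gamma> \<tau> \<theta> f s \<phi> Q \<and>
              (\<exists>M. \<forall>t\<ge>0. 0 \<le> Q t \<and> Q t \<le> M))
         \<and> (\<forall>Q1 Q2. is_solution \<kappa> \<gamma> \<tau> \<theta> f s \<phi> Q1 \<and> is_solution \<kappa> \<gamma> \<tau> \<theta> f s \<phi> Q2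
              \<longrightarrow> (\<forall>t\<ge>-\<tau>. Q1 t = Q2 t))"
proof -
  have pos: "\<kappa> \<ge> 0" "\<tau> \<ge> 0" "f \<ge> 0"
    using assms(1,3,5) by simp_all
  obtain Q where Q: "is_solution \<kappa> \<gamma> \<tau> \<theta> f s \<phi> Q"
    using is_solution_exists[OF pos(1,2) assms(4) pos(3) assms(6,7)] .
  obtain M where "\<And>t. t \<ge> -\<tau> \<Longrightarrow> 0 \<le> Q t \<and> Q t \<le> M"
    using is_solution_bounded[OF assms(1,3,4) pos(3) assms(6,7) _ Q] assms(8) by blast
  then have "\<forall>t\<ge>0. 0 \<le> Q t \<and> Q t \<le> M"
    using assms(3) by simp
  moreover have "\<forall>Q1 Q2. is_solution \<kappa> \<gamma> \<tau> \<theta> f s \<phi> Q1 \<and> is_solution \<kappa> \<gamma> \<tau> \<theta> f s \<phi> Q2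
      \<longrightarrow> (\<forall>t\<ge>-\<tau>. Q1 t = Q2 t)"
    using is_solution_unique[OF pos(1) assms(3,4) pos(3) assms(6)] by blast
  ultimately show ?thesis
    using Q by blast
qed

end
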